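(* Let $K=\mathbb{F}_{q^n}$, let $\sigma$ be an automorphism of $K$ of order $n>1$ with fixed field $F=\mathbb{F}_q$, and let $f(t)=t^m-\sum_{i=0}^{m-1}a_it^i\in K[t;\sigma]$ ($a_i\in K$, $m\ge 2$) be irreducible and not right-invariant. Let $L_f=S_f\setminus\{0\}$ be the multiplicative loop of $S_f$, and let $H$ be a loop automorphism of $L_f$. Then: (i) $H(K^\times)=K^\times$ and $H|_{K^\times}=\tau$ for some group automorphism $\tau\in\mathrm{Aut}(K^\times)$. (ii) If $n\ge m-1$, then $H(t)=kt$ for some $k\in K^\times$. (iii) If $n\ge m-1$, then for all $i\in\{1,\dots,m-1\}$ and all $z\in K^\times$, $H(zt^i)=H(z)H(t)^i=\tau(z)(kt)^i=\tau(z)\Big(\prod_{l=0}^{i-1}\sigma^l(k)\Big)t^i$. (iv) If $n\ge m-1$, then $H(t^i)=H(t)^i=(kt)^i=\Big(\prod_{l=0}^{i-1}\sigma^l(k)\Big)t^i$ for all $i\in\{1,\dots,m\}$ (where $t^m$ denotes the product $t\,t^{m-1}=\sum_{i=0}^{m-1}a_it^i$ in $S_f$); in particular $H\Big(\sum_{i=0}^{m-1}a_it^i\Big)=k\sigma(k)\cdots\sigma^{m-1}(k)\sum_{i=0}^{m-1}a_it^i$.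
   Context: $R=K[t;\sigma]$ is the twisted polynomial ring: polynomials $\sum b_it^i$ with $b_i\in K$, termwise addition, and multiplication determined by $tb=\sigma(b)t$ for $b\in K$. $f$ is irreducible if it has no factorization $f=gh$ with $\deg g,\deg h<\deg f$; $f$ is right-invariant if the left ideal $Rf$ is two-sided. $S_f$ is the set of elements of $R$ of degree $<m$ with the usual addition and multiplication $g\circ h=gh \bmod_r f$, the remainder of right division of $gh$ by $f$; under the hypotheses it is a proper semifield (finite nonassociative unital division algebra), and $L_f=S_f\setminus\{0\}$ is a loop under $\circ$, in which products are written by juxtaposition and powers $t^i$ ($i<m$) are the usual ones. $K$ is embedded in $S_f$ as the constant polynomials. A loop automorphism is a bijection $H:L_f\to L_f$ with $H(xy)=H(x)H(y)$. *)

theory Defs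
  imports "HOL-Computational_Algebra.Polynomial"
begin

text \<open>Twisted polynomial ring K[t;sigma]: elements are represented by ordinary
  coefficient polynomials (sum b_i t^i), with the same addition, but with the
  multiplication determined by t b = sigma(b) t, i.e.
  (sum b_i t^i)(sum c_j t^j) = sum b_i sigma^i(c_j) t^(i+j).\<close>

definition skew_mult :: "('a::comm_ring_1 \<Rightarrow> 'a) \<Rightarrow> 'a poly \<Rightarrow> 'a poly \<Rightarrow> 'a poly" where
  "skew_mult \<sigma> p q =
     (\<Sum>i\<le>degree p. \<Sum>j\<le>degree q. monom (coeff p i * (\<sigma> ^^ i) (coeff q j)) (i + j))"

definition skew_rmod :: "('a::comm_ring_1 \<Rightarrow> 'a) \<Rightarrow> 'a poly \<Rightarrow> 'a poly \<Rightarrow> 'a poly" where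
  "skew_rmod \<sigma> f p = (THE r. degree r < degree f \<and> (\<exists>g. p = skew_mult \<sigma> g f + r))"

definition skew_irreducible :: "('a::comm_ring_1 \<Rightarrow> 'a) \<Rightarrow> 'a poly \<Rightarrow> bool" where
  "skew_irreducible \<sigma> f \<longleftrightarrow>
     \<not> (\<exists>g h. f = skew_mult \<sigma> g h \<and> degree g < degree f \<and> degree h < degree f)"

text \<open>Right-invariant: the left ideal R f is two-sided, i.e. (R f) R \<subseteq> R f,
  equivalently f g \<in> R f for every g.\<close>

definition right_invariant :: "('a::comm_ring_1 \<Rightarrow> 'a) \<Rightarrow> 'a poly \<Rightarrow> bool" where
  "right_invariant \<sigma> f \<longleftrightarrow>
     (\<forall>g h. \<exists>h'. skew_mult \<sigma> (skew_mult \<sigma> h f) g = skew_mult \<sigma> h' f)"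

definition Sf :: "'a::comm_ring_1 poly \<Rightarrow> 'a poly set" where
  "Sf f = {g. degree g < degree f}"

definition Lf :: "'a::comm_ring_1 poly \<Rightarrow> 'a poly set" where
  "Lf f = {g. g \<noteq> 0 \<and> degree g < degree f}"

definition sf_mult :: "('a::comm_ring_1 \<Rightarrow> 'a) \<Rightarrow> 'a poly \<Rightarrow> 'a poly \<Rightarrow> 'a poly \<Rightarrow> 'a poly" where
  "sf_mult \<sigma> f g h = skew_rmod \<sigma> f (skew_mult \<sigma> g h)"

fun sf_pow :: "('a::comm_ring_1 \<Rightarrow> 'a) \<Rightarrow> 'a poly \<Rightarrow> 'a poly \<Rightarrow> nat \<Rightarrow> 'a poly" where
  "sf_pow \<sigma> f x 0 = 1"
| "sf_pow \<sigma> f x (Suc i) = sf_mult \<sigma> f x (sf_pow \<sigma> f x i)"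

definition loop_automorphism ::
  "('a::comm_ring_1 \<Rightarrow> 'a) \<Rightarrow> 'a poly \<Rightarrow> ('a poly \<Rightarrow> 'a poly) \<Rightarrow> bool" where
  "loop_automorphism \<sigma> f H \<longleftrightarrow>
     bij_betw H (Lf f) (Lf f) \<and>
     (\<forall>x\<in>Lf f. \<forall>y\<in>Lf f. H (sf_mult \<sigma> f x y) = sf_mult \<sigma> f (H x) (H y))"

definition field_automorphism :: "('a::field \<Rightarrow> 'a) \<Rightarrow> bool" where
  "field_automorphism \<sigma> \<longleftrightarrow> bij \<sigma> \<and> (\<forall>x y. \<sigma> (x + y) = \<sigma> x + \<sigma> y) \<and>
     (\<forall>x y. \<sigma> (x * y) = \<sigma> x * \<sigma> y) \<and> \<sigma> 1 = 1"

definition mult_group_automorphism :: "('a::field \<Rightarrow> 'a) \<Rightarrow> bool" where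
  "mult_group_automorphism \<tau> \<longleftrightarrow> bij_betw \<tau> (UNIV - {0}) (UNIV - {0}) \<and>
     (\<forall>x y. x \<noteq> 0 \<longrightarrow> y \<noteq> 0 \<longrightarrow> \<tau> (x * y) = \<tau> x * \<tau> y)"

end

theory Submission
  imports "HOL-Algebra.Multiplicative_Group" Defs
begin

text \<open>A loop automorphism H of L_f preserves the left nucleus of S_f. The nonzero constants
  lie in the left nucleus, and when f is not right-invariant nothing else does: for g of positive
  degree in the nucleus, dividing g t^(m-1) by f leaves a nonzero quotient P of degree below m with
  P (f y) \<in> R f, hence f y \<in> R f for all y, since S_f has no zero divisors. So H permutes the
  constants and restricts to a group automorphism \<tau> of K^*. Applying H to t z = \<sigma>(z) t gives
  H(t) z = \<sigma>(z) H(t), because \<tau> and \<sigma> are both power maps of the cyclic group K^* and therefore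
  commute. Comparing coefficients, \<sigma>^i = \<sigma> for every i in the support of H(t); as i < m \<le> n + 1
  and \<sigma> has order n, only i = 1 survives, so H(t) = k t. The remaining formulas follow from
  H(t^i) = H(t)^i and the explicit powers of k t in S_f.\<close>

section \<open>Multiplicative maps of a finite field\<close>

lemma finite_field_mult_generator:
  "\<exists>g::'a::{finite,field}. g \<noteq> 0 \<and> (\<forall>x. x \<noteq> 0 \<longrightarrow> (\<exists>i::nat. x = g ^ i))"
proof -
  define R :: "'a ring" where
    "R = \<lparr>carrier = UNIV, monoid.mult = (*), one = 1, zero = 0, add = (+)\<rparr>"
  have "field R"
  proof -
    have "\<exists>y. x + y = 0" for x :: 'a
      using add.right_inverse by blast
    moreover have "x \<noteq> 0 \<Longrightarrow> \<exists>y. x * y = 1" for x :: 'a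
      by (rule exI[of _ "inverse x"]) simp
    ultimately show ?thesis
      unfolding R_def by unfold_locales (auto simp: algebra_simps Units_def)
  qed
  moreover have "finite (carrier R)"
    by (simp add: R_def)
  ultimately obtain g where gen: "g \<in> carrier (mult_of R)"
    "carrier (mult_of R) = {g [^]\<^bsub>R\<^esub> i | i::nat. i \<in> UNIV}"
    by (elim field.finite_field_mult_group_has_gen[THEN bexE])
  have carrier: "carrier (mult_of R) = UNIV - {0}"
    by (simp add: R_def)
  have pow: "a [^]\<^bsub>R\<^esub> (i::nat) = a ^ i" for a :: 'a and i
    by (induction i) (simp_all add: R_def nat_pow_def mult.commute)
  have "g \<noteq> 0" and "UNIV - {0} = {g ^ i | i::nat. i \<in> UNIV}"
    using gen unfolding carrier pow by auto
  then show ?thesis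
    by blast
qed

definition nonzero_mult_hom :: "('a::field \<Rightarrow> 'a) \<Rightarrow> bool" where
  "nonzero_mult_hom \<mu> \<longleftrightarrow> (\<forall>x. x \<noteq> 0 \<longrightarrow> \<mu> x \<noteq> 0) \<and>
     (\<forall>x y. x \<noteq> 0 \<longrightarrow> y \<noteq> 0 \<longrightarrow> \<mu> (x * y) = \<mu> x * \<mu> y)"

lemma nonzero_mult_homD:
  assumes "nonzero_mult_hom \<mu>"
  shows "x \<noteq> 0 \<Longrightarrow> \<mu> x \<noteq> 0"
    and "x \<noteq> 0 \<Longrightarrow> y \<noteq> 0 \<Longrightarrow> \<mu> (x * y) = \<mu> x * \<mu> y"
  using assms unfolding nonzero_mult_hom_def by blast+

lemma nonzero_mult_hom_power:
  assumes \<mu>: "nonzero_mult_hom \<mu>" and x: "x \<noteq> 0"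
  shows "\<mu> (x ^ i) = \<mu> x ^ i"
proof (induction i)
  case 0
  have "\<mu> 1 * \<mu> 1 = \<mu> 1 * 1"
    using nonzero_mult_homD(2)[OF \<mu>, of 1 1] by simp
  then show ?case
    using nonzero_mult_homD(1)[OF \<mu>, of 1] by simp
next
  case (Suc i)
  then show ?case
    using nonzero_mult_homD(2)[OF \<mu> x, of "x ^ i"] x by simp
qed

lemma nonzero_mult_hom_is_power:
  fixes \<mu> :: "'a::{finite,field} \<Rightarrow> 'a"
  assumes \<mu>: "nonzero_mult_hom \<mu>"
  obtains e where "\<And>x. x \<noteq> 0 \<Longrightarrow> \<mu> x = x ^ e"
proof -
  obtain g :: 'a where g: "g \<noteq> 0" "\<And>x. x \<noteq> 0 \<Longrightarrow> \<exists>i. x = g ^ i"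
    using finite_field_mult_generator by blast
  obtain e where e: "\<mu> g = g ^ e"
    using g(2) nonzero_mult_homD(1)[OF \<mu> g(1)] by blast
  have "\<mu> x = x ^ e" if x: "x \<noteq> 0" for x
  proof -
    obtain i where "x = g ^ i" using g(2)[OF x] by blast
    then show ?thesis
      using nonzero_mult_hom_power[OF \<mu> g(1)] e by (simp flip: power_mult add: mult.commute)
  qed
  then show thesis by (rule that)
qed

lemma nonzero_mult_homs_commute:
  fixes \<mu> \<nu> :: "'a::{finite,field} \<Rightarrow> 'a"
  assumes \<mu>: "nonzero_mult_hom \<mu>" and \<nu>: "nonzero_mult_hom \<nu>" and x: "x \<noteq> 0"
  shows "\<mu> (\<nu> x) = \<nu> (\<mu> x)"
proof -
  obtain a where a: "\<And>x. x \<noteq> 0 \<Longrightarrow> \<mu> x = x ^ a"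
    using nonzero_mult_hom_is_power[OF \<mu>] by metis
  obtain b where b: "\<And>x. x \<noteq> 0 \<Longrightarrow> \<nu> x = x ^ b"
    using nonzero_mult_hom_is_power[OF \<nu>] by metis
  have "\<nu> x \<noteq> 0" "\<mu> x \<noteq> 0"
    using nonzero_mult_homD(1) \<mu> \<nu> x by blast+
  then show ?thesis
    using a b x by (simp flip: power_mult add: mult.commute)
qed

lemma mult_group_automorphism_imp_nonzero_mult_hom:
  "mult_group_automorphism \<tau> \<Longrightarrow> nonzero_mult_hom \<tau>"
  unfolding mult_group_automorphism_def nonzero_mult_hom_def bij_betw_def by blast

section \<open>Skew polynomials\<close>

lemma degree_diff_less_same_lead:
  fixes p q :: "'a::ab_group_add poly"
  assumes "degree q = degree p" and "lead_coeff q = lead_coeff p"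
  shows "p = q \<or> degree (p - q) < degree p"
proof (cases "p = q")
  case False
  moreover have "degree (p - q) \<le> degree p"
    using assms(1) degree_diff_le_max[of p q] by simp
  moreover have "coeff (p - q) (degree p) = 0"
    using assms by simp
  ultimately show ?thesis
    by (metis diff_eq_diff_eq diff_self le_neq_implies_less leading_coeff_0_iff)
qed simp

locale field_endo =
  fixes \<sigma> :: "'a::field \<Rightarrow> 'a"
  assumes hom_add: "\<sigma> (x + y) = \<sigma> x + \<sigma> y"
    and hom_mult: "\<sigma> (x * y) = \<sigma> x * \<sigma> y"
    and hom_one: "\<sigma> 1 = 1"
    and inj_hom: "inj \<sigma>"
begin

lemma hom_zero: "\<sigma> 0 = 0"
  using hom_add[of 0 0] by (simp only: add_0_right add_cancel_right_right)

lemma iter_add: "(\<sigma> ^^ i) (x + y) = (\<sigma> ^^ i) x + (\<sigma> ^^ i) y"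
  by (induction i) (simp_all add: hom_add)

lemma iter_mult: "(\<sigma> ^^ i) (x * y) = (\<sigma> ^^ i) x * (\<sigma> ^^ i) y"
  by (induction i) (simp_all add: hom_mult)

lemma iter_one [simp]: "(\<sigma> ^^ i) 1 = 1"
  by (induction i) (simp_all add: hom_one)

lemma iter_zero [simp]: "(\<sigma> ^^ i) 0 = 0"
  by (induction i) (simp_all add: hom_zero)

lemma iter_eq_0_iff [simp]: "(\<sigma> ^^ i) x = 0 \<longleftrightarrow> x = 0"
  using inj_fn[OF inj_hom, of i] by (metis injD iter_zero)

lemma iter_prod: "(\<sigma> ^^ i) (\<Prod>l\<in>A. g l) = (\<Prod>l\<in>A. (\<sigma> ^^ i) (g l))"
  by (induction A rule: infinite_finite_induct) (simp_all add: iter_mult)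

lemma iter_prod_Suc: "k * \<sigma> (\<Prod>l<i. (\<sigma> ^^ l) k) = (\<Prod>l<Suc i. (\<sigma> ^^ l) k)"
proof -
  have "\<sigma> (\<Prod>l<i. (\<sigma> ^^ l) k) = (\<Prod>l<i. (\<sigma> ^^ Suc l) k)"
    using iter_prod[of 1 "\<lambda>l. (\<sigma> ^^ l) k" "{..<i}"] by simp
  then show ?thesis
    by (simp only: prod.lessThan_Suc_shift funpow_0 id_apply)
qed

lemma nonzero_mult_hom: "nonzero_mult_hom \<sigma>"
  using iter_eq_0_iff[of 1] by (simp add: nonzero_mult_hom_def hom_mult)

lemma iter_eq_self_imp_1:
  assumes "\<sigma> ^^ i = \<sigma>" and "i \<le> n" and order: "\<And>j. 0 < j \<Longrightarrow> j < n \<Longrightarrow> \<sigma> ^^ j \<noteq> id"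
    and "\<sigma> \<noteq> id"
  shows "i = 1"
proof -
  have "i \<noteq> 0"
    using assms(1,4) by auto
  then have "\<sigma> ((\<sigma> ^^ (i - 1)) x) = \<sigma> x" for x
    using assms(1) by (metis Suc_pred' comp_apply funpow.simps(2) neq0_conv)
  then have "\<sigma> ^^ (i - 1) = id"
    using inj_hom by (auto simp: fun_eq_iff inj_def)
  then show "i = 1"
    using order[of "i - 1"] \<open>i \<noteq> 0\<close> assms(2) by linarith
qed

abbreviation skew_times :: "'a poly \<Rightarrow> 'a poly \<Rightarrow> 'a poly" (infixl "\<star>" 70) where
  "p \<star> q \<equiv> skew_mult \<sigma> p q"

lemma skew_mult_eq_sum:
  assumes "degree p \<le> N" "degree q \<le> M"
  shows "p \<star> q = (\<Sum>i\<le>N. \<Sum>j\<le>M. monom (coeff p i * (\<sigma> ^^ i) (coeff q j)) (i + j))"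
proof -
  have "(\<Sum>i\<le>N. \<Sum>j\<le>M. monom (coeff p i * (\<sigma> ^^ i) (coeff q j)) (i + j))
      = (\<Sum>i\<le>degree p. \<Sum>j\<le>M. monom (coeff p i * (\<sigma> ^^ i) (coeff q j)) (i + j))"
    by (rule sum.mono_neutral_right) (use assms in \<open>auto simp: coeff_eq_0\<close>)
  also have "\<dots> = (\<Sum>i\<le>degree p. \<Sum>j\<le>degree q. monom (coeff p i * (\<sigma> ^^ i) (coeff q j)) (i + j))"
    by (rule sum.cong[OF refl], rule sum.mono_neutral_right) (use assms in \<open>auto simp: coeff_eq_0\<close>)
  finally show ?thesis
    by (simp add: skew_mult_def)
qed

lemma skew_mult_monom: "monom a i \<star> monom b j = monom (a * (\<sigma> ^^ i) b) (i + j)"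
proof -
  have "monom a i \<star> monom b j
      = (\<Sum>i'\<le>i. \<Sum>j'\<le>j. monom (coeff (monom a i) i' * (\<sigma> ^^ i') (coeff (monom b j) j')) (i' + j'))"
    by (rule skew_mult_eq_sum) (simp_all add: degree_monom_le)
  also have "\<dots> = monom (a * (\<sigma> ^^ i) b) (i + j)"
    by (simp add: coeff_monom if_distrib[of "\<lambda>c. monom (c * _) _"] if_distrib[of "\<lambda>c. monom (_ * c) _"]
        if_distrib[of "\<lambda>c. (\<sigma> ^^ _) c"] cong: if_cong)
  finally show ?thesis .
qed

lemma skew_mult_add_left: "(p1 + p2) \<star> q = p1 \<star> q + p2 \<star> q"
proof -
  define N where "N = max (degree p1) (degree p2)"
  have "degree p1 \<le> N" "degree p2 \<le> N" "degree (p1 + p2) \<le> N"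
    by (auto simp: N_def intro: degree_add_le)
  then show ?thesis
    by (simp add: skew_mult_eq_sum[OF _ order.refl] distrib_right sum.distrib flip: add_monom)
qed

lemma skew_mult_add_right: "p \<star> (q1 + q2) = p \<star> q1 + p \<star> q2"
proof -
  define M where "M = max (degree q1) (degree q2)"
  have "degree q1 \<le> M" "degree q2 \<le> M" "degree (q1 + q2) \<le> M"
    by (auto simp: M_def intro: degree_add_le)
  then show ?thesis
    by (simp add: skew_mult_eq_sum[OF order.refl] iter_add distrib_left sum.distrib flip: add_monom)
qed

lemma skew_mult_0_left [simp]: "0 \<star> q = 0"
  by (simp add: skew_mult_def)

lemma skew_mult_0_right [simp]: "p \<star> 0 = 0"
  by (simp add: skew_mult_def)

lemma skew_mult_diff_left: "(p1 - p2) \<star> q = p1 \<star> q - p2 \<star> q"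
  by (metis add_diff_cancel diff_add_cancel skew_mult_add_left)

lemma skew_mult_diff_right: "p \<star> (q1 - q2) = p \<star> q1 - p \<star> q2"
  by (metis add_diff_cancel diff_add_cancel skew_mult_add_right)

lemma skew_mult_sum_left: "(\<Sum>x\<in>A. P x) \<star> q = (\<Sum>x\<in>A. P x \<star> q)"
  by (induction A rule: infinite_finite_induct) (simp_all add: skew_mult_add_left)

lemma skew_mult_sum_right: "p \<star> (\<Sum>x\<in>A. P x) = (\<Sum>x\<in>A. p \<star> P x)"
  by (induction A rule: infinite_finite_induct) (simp_all add: skew_mult_add_right)

lemma skew_mult_assoc: "p \<star> q \<star> r = p \<star> (q \<star> r)"
proof -
  have monoms: "monom a i \<star> monom b j \<star> monom c k = monom a i \<star> (monom b j \<star> monom c k)"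
    for a b c i j k
    by (simp add: skew_mult_monom iter_mult funpow_add mult.assoc add_ac)
  have "monom a i \<star> monom b j \<star> r = monom a i \<star> (monom b j \<star> r)" for a b i j
    by (subst (1 2) poly_as_sum_of_monoms[symmetric]) (simp only: skew_mult_sum_right monoms)
  then have "monom a i \<star> q \<star> r = monom a i \<star> (q \<star> r)" for a i
    by (subst (1 2) poly_as_sum_of_monoms[of q, symmetric])
      (simp only: skew_mult_sum_left skew_mult_sum_right)
  then show ?thesis
    by (subst (1 2) poly_as_sum_of_monoms[of p, symmetric]) (simp only: skew_mult_sum_left)
qed

lemma skew_mult_const_left: "[:c:] \<star> p = smult c p"
  by (rule poly_eqI) (auto simp: skew_mult_eq_sum[of _ 0 p "degree p"] coeff_sum coeff_monom coeff_eq_0)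

lemma coeff_skew_mult_const_right: "coeff (p \<star> [:c:]) i = coeff p i * (\<sigma> ^^ i) c"
  by (auto simp: skew_mult_eq_sum[of p "degree p" _ 0] coeff_sum coeff_monom coeff_eq_0)

lemma skew_mult_1_right [simp]: "p \<star> 1 = p"
  by (rule poly_eqI) (simp add: one_pCons coeff_skew_mult_const_right)

lemma skew_mult_smult_left: "smult c p \<star> q = smult c (p \<star> q)"
  by (metis skew_mult_assoc skew_mult_const_left)

lemma skew_mult_1_left [simp]: "1 \<star> p = p"
  using skew_mult_const_left[of 1 p] by (simp add: one_pCons)

lemma skew_mult_nonzero:
  assumes p: "p \<noteq> 0" and q: "q \<noteq> 0"
  shows "degree (p \<star> q) = degree p + degree q"
    and "lead_coeff (p \<star> q) = lead_coeff p * (\<sigma> ^^ degree p) (lead_coeff q)"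
    and "p \<star> q \<noteq> 0"
proof -
  have coeff: "coeff (p \<star> q) k =
      (\<Sum>i\<le>degree p. \<Sum>j\<le>degree q. if i + j = k then coeff p i * (\<sigma> ^^ i) (coeff q j) else 0)" for k
    by (simp add: skew_mult_eq_sum[OF order.refl order.refl] coeff_sum coeff_monom)
  have "coeff (p \<star> q) (degree p + degree q) = (\<Sum>i\<le>degree p. \<Sum>j\<le>degree q.
      if degree q = j then if degree p = i then lead_coeff p * (\<sigma> ^^ i) (lead_coeff q) else 0 else 0)"
    unfolding coeff by (intro sum.cong refl) auto
  then have top: "coeff (p \<star> q) (degree p + degree q) = lead_coeff p * (\<sigma> ^^ degree p) (lead_coeff q)"
    by simp
  then have lead: "coeff (p \<star> q) (degree p + degree q) \<noteq> 0"
    using p q by simp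
  moreover have "coeff (p \<star> q) k = 0" if "degree p + degree q < k" for k
    using that unfolding coeff by (auto intro!: sum.neutral)
  ultimately show deg: "degree (p \<star> q) = degree p + degree q"
    by (meson antisym degree_le le_degree)
  show "lead_coeff (p \<star> q) = lead_coeff p * (\<sigma> ^^ degree p) (lead_coeff q)"
    using top deg by simp
  show "p \<star> q \<noteq> 0"
    using lead by auto
qed

lemma skew_division:
  assumes u: "u \<noteq> 0"
  shows "\<exists>Q r. p = Q \<star> u + r \<and> (r = 0 \<or> degree r < degree u)"
proof (induction "degree p" arbitrary: p rule: less_induct)
  case less
  show ?case
  proof (cases "p = 0 \<or> degree p < degree u")
    case True
    then show ?thesis
      by (metis add_0 skew_mult_0_left)
  next
    case False
    define e where "e = degree p - degree u"
    define c where "c = lead_coeff p / (\<sigma> ^^ e) (lead_coeff u)"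
    define m where "m = monom c e \<star> u"
    have "c \<noteq> 0"
      using False u by (simp add: c_def)
    then have c: "monom c e \<noteq> 0" "degree (monom c e) = e" "lead_coeff (monom c e) = c"
      by (simp_all add: degree_monom_eq)
    have "degree m = e + degree u"
      using skew_mult_nonzero(1)[OF c(1) u] by (simp add: m_def c(2))
    then have "degree m = degree p"
      using False by (simp add: e_def)
    moreover have "lead_coeff m = c * (\<sigma> ^^ e) (lead_coeff u)"
      using skew_mult_nonzero(2)[OF c(1) u] by (simp add: m_def c(2,3))
    moreover have "c * (\<sigma> ^^ e) (lead_coeff u) = lead_coeff p"
      using u by (simp add: c_def)
    ultimately have "p - m = 0 \<or> degree (p - m) < degree p"
      using degree_diff_less_same_lead[of m p] by auto
    moreover have "\<exists>Q r. p - m = Q \<star> u + r \<and> (r = 0 \<or> degree r < degree u)" if "p - m = 0"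
      using that by (intro exI[of _ 0]) simp
    moreover have "\<exists>Q r. p - m = Q \<star> u + r \<and> (r = 0 \<or> degree r < degree u)"
      if "degree (p - m) < degree p"
      using less[OF that] .
    ultimately obtain Q r where "p - m = Q \<star> u + r" "r = 0 \<or> degree r < degree u"
      by blast
    then have "p = (monom c e + Q) \<star> u + r"
      by (simp add: m_def skew_mult_add_left diff_eq_eq)
    then show ?thesis
      using \<open>r = 0 \<or> degree r < degree u\<close> by blast
  qed
qed

lemma skew_division_unique:
  assumes u: "u \<noteq> 0" and eq: "Q1 \<star> u + r1 = Q2 \<star> u + r2"
    and r1: "degree r1 < degree u" and r2: "degree r2 < degree u"
  shows "Q1 = Q2" and "r1 = r2"
proof -
  have "(Q1 - Q2) \<star> u = r2 - r1"
    using eq by (simp add: skew_mult_diff_left algebra_simps)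
  moreover have "degree (r2 - r1) < degree u"
    using r1 r2 by (rule degree_diff_less[rotated])
  ultimately show "Q1 = Q2"
    using skew_mult_nonzero(1)[OF _ u, of "Q1 - Q2"] by fastforce
  then show "r1 = r2"
    using eq by simp
qed

lemma left_ideal_principal:
  assumes diff: "\<And>a b. a \<in> I \<Longrightarrow> b \<in> I \<Longrightarrow> a - b \<in> I"
    and mult: "\<And>h a. a \<in> I \<Longrightarrow> h \<star> a \<in> I"
    and x: "x \<in> I" "x \<noteq> 0"
  obtains u where "u \<in> I" "u \<noteq> 0" "degree u \<le> degree x" "\<And>a. a \<in> I \<Longrightarrow> \<exists>Q. a = Q \<star> u"
proof -
  obtain u where u: "u \<in> I" "u \<noteq> 0"
    and least: "\<And>v. v \<in> I \<Longrightarrow> v \<noteq> 0 \<Longrightarrow> degree u \<le> degree v"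
    using ex_has_least_nat[of "\<lambda>v. v \<in> I \<and> v \<noteq> 0" x degree] x by blast
  have "\<exists>Q. a = Q \<star> u" if a: "a \<in> I" for a
  proof -
    obtain Q r where Qr: "a = Q \<star> u + r" "r = 0 \<or> degree r < degree u"
      using skew_division[OF u(2)] by blast
    have "r = a - Q \<star> u"
      using Qr(1) by simp
    then have "r \<in> I"
      using a u(1) diff mult by simp
    then have "r = 0"
      using Qr(2) least by fastforce
    then show ?thesis
      using Qr(1) by auto
  qed
  then show thesis
    using that u least x by blast
qed

lemma left_ideal_pair_principal:
  assumes y: "y \<noteq> 0"
  obtains d a b v where "d \<noteq> 0" "degree d \<le> degree y" "d = a \<star> y + b \<star> g" "g = v \<star> d"
proof -
  define I where "I = {a \<star> y + b \<star> g | a b. True}"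
  have diff: "p - q \<in> I" if p: "p \<in> I" and q: "q \<in> I" for p q
  proof -
    obtain a b a' b' where "p = a \<star> y + b \<star> g" "q = a' \<star> y + b' \<star> g"
      using p q unfolding I_def by blast
    then have "p - q = (a - a') \<star> y + (b - b') \<star> g"
      by (simp add: skew_mult_diff_left algebra_simps)
    then show ?thesis
      unfolding I_def by blast
  qed
  have mult: "h \<star> p \<in> I" if p: "p \<in> I" for h p
  proof -
    obtain a b where "p = a \<star> y + b \<star> g"
      using p unfolding I_def by blast
    then have "h \<star> p = (h \<star> a) \<star> y + (h \<star> b) \<star> g"
      by (simp add: skew_mult_add_right skew_mult_assoc)
    then show ?thesis
      unfolding I_def by blast
  qed
  have "y = 1 \<star> y + 0 \<star> g" "g = 0 \<star> y + 1 \<star> g"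
    by simp_all
  then have "y \<in> I" and "g \<in> I"
    unfolding I_def by blast+
  obtain d where d: "d \<in> I" "d \<noteq> 0" "degree d \<le> degree y"
    and gen: "\<And>a. a \<in> I \<Longrightarrow> \<exists>Q. a = Q \<star> d"
    using left_ideal_principal[OF diff mult \<open>y \<in> I\<close> y] by auto
  obtain a b where "d = a \<star> y + b \<star> g"
    using d(1) unfolding I_def by blast
  moreover obtain v where "g = v \<star> d"
    using gen[OF \<open>g \<in> I\<close>] by blast
  ultimately show thesis
    by (rule that[OF d(2,3)])
qed

end

lemma finite_degree_less: "finite {p :: 'a::{finite,zero} poly. degree p < n}"
proof -
  have "{p :: 'a poly. degree p < n} \<subseteq> Poly ` {xs. set xs \<subseteq> UNIV \<and> length xs \<le> n}"
  proof
    fix p :: "'a poly"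
    assume "p \<in> {p. degree p < n}"
    then have "length (coeffs p) \<le> n"
      by (cases "p = 0") (auto simp: length_coeffs_degree)
    then show "p \<in> Poly ` {xs. set xs \<subseteq> UNIV \<and> length xs \<le> n}"
      by (metis (mono_tags, lifting) Poly_coeffs image_iff mem_Collect_eq top_greatest)
  qed
  moreover have "finite {xs :: 'a list. set xs \<subseteq> UNIV \<and> length xs \<le> n}"
    by (rule finite_lists_length_le) simp
  ultimately show ?thesis
    by (meson finite_imageI finite_subset)
qed

lemma field_automorphism_imp_field_endo: "field_automorphism \<sigma> \<Longrightarrow> field_endo \<sigma>"
  unfolding field_automorphism_def field_endo_def by (simp add: bij_is_inj)

section \<open>Remainders modulo f and the multiplication of S_f\<close>

locale skew_quotient = field_endo \<sigma> for \<sigma> :: "'a::field \<Rightarrow> 'a" +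
  fixes f :: "'a poly"
  assumes degree_f_pos: "0 < degree f"
begin

lemma f_nonzero: "f \<noteq> 0"
  using degree_f_pos by auto

abbreviation rmod :: "'a poly \<Rightarrow> 'a poly" where
  "rmod \<equiv> skew_rmod \<sigma> f"

abbreviation sf_times :: "'a poly \<Rightarrow> 'a poly \<Rightarrow> 'a poly" (infixl "\<circ>\<^sub>f" 70) where
  "x \<circ>\<^sub>f y \<equiv> sf_mult \<sigma> f x y"

definition left_multiples :: "'a poly set" where
  "left_multiples = range (\<lambda>Q. Q \<star> f)"

lemma skew_mult_in_left_multiples [simp]: "Q \<star> f \<in> left_multiples"
  by (simp add: left_multiples_def)

lemma zero_in_left_multiples [simp]: "0 \<in> left_multiples"
  using skew_mult_in_left_multiples[of 0] by simp

lemma left_multiples_add: "p \<in> left_multiples \<Longrightarrow> q \<in> left_multiples \<Longrightarrow> p + q \<in> left_multiples"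
  unfolding left_multiples_def by (auto simp flip: skew_mult_add_left)

lemma left_multiples_diff: "p \<in> left_multiples \<Longrightarrow> q \<in> left_multiples \<Longrightarrow> p - q \<in> left_multiples"
  unfolding left_multiples_def by (auto simp flip: skew_mult_diff_left)

lemma left_multiples_mult: "p \<in> left_multiples \<Longrightarrow> g \<star> p \<in> left_multiples"
  unfolding left_multiples_def by (auto simp flip: skew_mult_assoc)

lemma rmod_eqI:
  assumes "degree r < degree f" and "p = Q \<star> f + r"
  shows "rmod p = r"
  unfolding skew_rmod_def
proof (rule the_equality)
  show "degree r < degree f \<and> (\<exists>g. p = g \<star> f + r)"
    using assms by blast
next
  fix r'
  assume r': "degree r' < degree f \<and> (\<exists>g. p = g \<star> f + r')"
  then obtain g where "g \<star> f + r' = Q \<star> f + r"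
    using assms(2) by auto
  then show "r' = r"
    using skew_division_unique(2)[OF f_nonzero] r' assms(1) by blast
qed

lemma degree_rmod_less: "degree (rmod p) < degree f"
  and rmod_decomp: "\<exists>Q. rmod p = p - Q \<star> f"
proof -
  obtain Q r where Qr: "p = Q \<star> f + r" "r = 0 \<or> degree r < degree f"
    using skew_division[OF f_nonzero] by blast
  then have "degree r < degree f"
    using degree_f_pos by auto
  from this Qr(1) have "rmod p = r"
    by (rule rmod_eqI)
  then show "degree (rmod p) < degree f" "\<exists>Q. rmod p = p - Q \<star> f"
    using \<open>degree r < degree f\<close> Qr(1) by auto
qed

lemma rmod_id: "degree p < degree f \<Longrightarrow> rmod p = p"
  using rmod_eqI[of p p 0] by simp

lemma degree_monom_less: "i < degree f \<Longrightarrow> degree (monom c i) < degree f"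
  using degree_monom_le le_less_trans by blast

lemma rmod_monom: "i < degree f \<Longrightarrow> rmod (monom c i) = monom c i"
  by (rule rmod_id[OF degree_monom_less])

lemma rmod_rmod [simp]: "rmod (rmod p) = rmod p"
  by (rule rmod_id[OF degree_rmod_less])

lemma rmod_diff: "rmod (p - q) = rmod p - rmod q"
proof -
  obtain Q1 Q2 where "rmod p = p - Q1 \<star> f" "rmod q = q - Q2 \<star> f"
    using rmod_decomp by blast
  then have "p - q = (Q1 - Q2) \<star> f + (rmod p - rmod q)"
    by (simp add: skew_mult_diff_left)
  moreover have "degree (rmod p - rmod q) < degree f"
    by (intro degree_diff_less degree_rmod_less)
  ultimately show ?thesis
    by (rule rmod_eqI[rotated])
qed

lemma rmod_eq_0_iff: "rmod p = 0 \<longleftrightarrow> p \<in> left_multiples"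
  using rmod_decomp[of p] rmod_eqI[of 0 p] degree_f_pos by (auto simp: left_multiples_def)

lemma rmod_smult: "rmod (smult c p) = smult c (rmod p)"
proof -
  obtain Q where "rmod p = p - Q \<star> f"
    using rmod_decomp by blast
  then have "smult c p = smult c Q \<star> f + smult c (rmod p)"
    by (simp add: skew_mult_smult_left smult_diff_right)
  moreover have "degree (smult c (rmod p)) < degree f"
    using degree_rmod_less by (meson degree_smult_le le_less_trans)
  ultimately show ?thesis
    by (rule rmod_eqI[rotated])
qed

lemma skew_mult_rmod_decomp: "\<exists>Q. g \<star> rmod p = g \<star> p - Q \<star> f"
proof -
  obtain Q where "rmod p = p - Q \<star> f"
    using rmod_decomp by blast
  then have "g \<star> rmod p = g \<star> p - (g \<star> Q) \<star> f"
    by (simp add: skew_mult_diff_right skew_mult_assoc)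
  then show ?thesis ..
qed

lemma rmod_skew_mult_rmod: "rmod (g \<star> rmod p) = rmod (g \<star> p)"
  using skew_mult_rmod_decomp[of g p] by (auto simp: rmod_diff rmod_eq_0_iff)

lemma rmod_1 [simp]: "rmod 1 = 1"
  using degree_f_pos by (simp add: rmod_id)

lemma sf_mult_1_right [simp]: "degree x < degree f \<Longrightarrow> x \<circ>\<^sub>f 1 = x"
  by (simp add: sf_mult_def rmod_id)

lemma sf_mult_const_left: "degree g < degree f \<Longrightarrow> [:c:] \<circ>\<^sub>f g = smult c g"
  by (simp add: sf_mult_def skew_mult_const_left rmod_id degree_smult_le le_less_trans)

lemma coeff_sf_mult_const_right:
  assumes "degree g < degree f"
  shows "coeff (g \<circ>\<^sub>f [:c:]) i = coeff g i * (\<sigma> ^^ i) c"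
proof -
  have "degree (g \<star> [:c:]) \<le> degree g"
    by (rule degree_le) (simp add: coeff_skew_mult_const_right coeff_eq_0)
  then show ?thesis
    using assms by (simp add: sf_mult_def rmod_id coeff_skew_mult_const_right)
qed

lemma monom_sf_mult_const: "monom 1 1 \<circ>\<^sub>f [:z:] = [:\<sigma> z:] \<circ>\<^sub>f monom 1 1"
  by (simp add: sf_mult_def skew_mult_const_left smult_monom flip: monom_0 add: skew_mult_monom)

lemma Lf_const: "z \<noteq> 0 \<Longrightarrow> [:z:] \<in> Lf f"
  using degree_f_pos by (simp add: Lf_def)

lemma t_in_Lf: "1 < degree f \<Longrightarrow> monom 1 1 \<in> Lf f"
  by (simp add: Lf_def degree_monom_eq)

lemma one_in_Lf: "1 \<in> Lf f"
  using Lf_const[of 1] by (simp add: one_pCons)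

lemma right_invariantI:
  assumes "\<And>y. y \<in> Lf f \<Longrightarrow> f \<star> y \<in> left_multiples"
  shows "right_invariant \<sigma> f"
  unfolding right_invariant_def
proof (intro allI)
  fix g h
  obtain Q where Q: "f \<star> rmod g = f \<star> g - Q \<star> f"
    using skew_mult_rmod_decomp by blast
  have "f \<star> rmod g \<in> left_multiples"
    using assms[of "rmod g"] degree_rmod_less by (cases "rmod g = 0") (auto simp: Lf_def)
  then have "f \<star> g \<in> left_multiples"
    using left_multiples_add[OF _ skew_mult_in_left_multiples[of Q]] Q by fastforce
  then obtain Q' where "f \<star> g = Q' \<star> f"
    by (auto simp: left_multiples_def)
  then have "h \<star> f \<star> g = (h \<star> Q') \<star> f"
    by (simp add: skew_mult_assoc)
  then show "\<exists>h'. h \<star> f \<star> g = h' \<star> f" ..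
qed

lemma sf_mult_const_const: "[:x:] \<circ>\<^sub>f [:y:] = [:x * y:]"
  using degree_f_pos by (simp add: sf_mult_const_left)

lemma skew_mult_top_monom_quotient:
  assumes g: "0 < degree g" "degree g < degree f"
  defines "x \<equiv> monom 1 (degree f - 1)"
  obtains P where "P \<noteq> 0" "degree P < degree f" "rmod (g \<star> x) = g \<star> x - P \<star> f"
proof -
  obtain P where P: "rmod (g \<star> x) = g \<star> x - P \<star> f"
    using rmod_decomp by blast
  have "g \<noteq> 0" "x \<noteq> 0" "degree x = degree f - 1"
    using g by (auto simp: x_def degree_monom_eq)
  then have gx: "degree (g \<star> x) = degree g + (degree f - 1)"
    using skew_mult_nonzero(1) by simp
  have "P \<noteq> 0"
  proof
    assume "P = 0"
    then have "degree (g \<star> x) < degree f"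
      using P degree_rmod_less[of "g \<star> x"] by simp
    then show False
      using gx g by simp
  qed
  moreover have "P \<star> f = g \<star> x - rmod (g \<star> x)"
    using P by simp
  then have "degree (P \<star> f) \<le> degree g + (degree f - 1)"
    using gx degree_diff_le_max[of "g \<star> x" "rmod (g \<star> x)"] degree_rmod_less[of "g \<star> x"] by simp
  then have "degree P < degree f"
    using skew_mult_nonzero(1)[OF \<open>P \<noteq> 0\<close> f_nonzero] g by linarith
  ultimately show thesis
    using P that by blast
qed

lemma sf_pow_monom:
  assumes "i \<le> degree f"
  shows "sf_pow \<sigma> f (monom k 1) i = rmod (monom (\<Prod>l<i. (\<sigma> ^^ l) k) i)"
  using assms
proof (induction i)
  case (Suc i)
  then have "sf_pow \<sigma> f (monom k 1) i = monom (\<Prod>l<i. (\<sigma> ^^ l) k) i"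
    by (simp add: rmod_monom)
  then show ?case
    by (simp add: sf_mult_def skew_mult_monom iter_prod_Suc)
qed simp

lemma sf_pow_monom_eq_smult:
  assumes "i \<le> degree f"
  shows "sf_pow \<sigma> f (monom k 1) i = smult (\<Prod>l<i. (\<sigma> ^^ l) k) (sf_pow \<sigma> f (monom 1 1) i)"
  using sf_pow_monom[OF assms, of k] sf_pow_monom[OF assms, of 1] by (simp add: smult_monom flip: rmod_smult)

lemma sf_mult_const_sf_pow_monom:
  assumes "i < degree f"
  shows "[:c:] \<circ>\<^sub>f sf_pow \<sigma> f (monom k 1) i = monom (c * (\<Prod>l<i. (\<sigma> ^^ l) k)) i"
  using assms sf_pow_monom[of i k] by (simp add: rmod_monom sf_mult_const_left[OF degree_monom_less] smult_monom)

lemma sf_pow_t: "i < degree f \<Longrightarrow> sf_pow \<sigma> f (monom 1 1) i = monom 1 i"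
  using sf_pow_monom[of i 1] by (simp add: rmod_monom)

lemma sf_pow_t_degree:
  assumes monic: "lead_coeff f = 1"
  shows "sf_pow \<sigma> f (monom 1 1) (degree f) = monom 1 (degree f) - f"
proof -
  have "monom 1 (degree f) - f = 0 \<or> degree (monom 1 (degree f) - f) < degree f"
    using degree_diff_less_same_lead[of f "monom 1 (degree f)"] monic by (simp add: degree_monom_eq)
  then have "degree (monom 1 (degree f) - f) < degree f"
    using degree_f_pos by auto
  then have "rmod (monom 1 (degree f)) = monom 1 (degree f) - f"
    by (rule rmod_eqI[where Q = 1]) simp
  then show ?thesis
    using sf_pow_monom[of "degree f" 1] by simp
qed

lemma rmod_right_mult_onto:
  assumes ab: "a \<star> y + b \<star> f = 1" and uy: "u \<star> y = w \<star> f" and u: "u \<noteq> 0"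
    and c: "degree c < degree f"
  obtains p where "p = 0 \<or> degree p < degree u" "rmod (p \<star> y) = c"
proof -
  obtain Q p where Qp: "c \<star> a = Q \<star> u + p" "p = 0 \<or> degree p < degree u"
    using skew_division[OF u] by blast
  have "p = c \<star> a - Q \<star> u"
    using Qp(1) by simp
  then have "p \<star> y = c \<star> (a \<star> y) - Q \<star> (u \<star> y)"
    by (simp add: skew_mult_diff_left skew_mult_assoc)
  also have "\<dots> = c \<star> (1 - b \<star> f) - Q \<star> (w \<star> f)"
    using ab uy by (simp flip: ab)
  also have "\<dots> = c - (c \<star> b + Q \<star> w) \<star> f"
    by (simp add: skew_mult_diff_right skew_mult_add_left skew_mult_assoc)
  finally have "rmod (p \<star> y) = c"
    using c by (simp add: rmod_diff rmod_id rmod_eq_0_iff)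
  with Qp(2) show thesis
    by (rule that)
qed

lemma twisted_commuting_coeff:
  assumes h: "degree h < degree f" and comm: "\<And>c. c \<noteq> 0 \<Longrightarrow> h \<circ>\<^sub>f [:c:] = [:\<sigma> c:] \<circ>\<^sub>f h"
    and i: "coeff h i \<noteq> 0"
  shows "\<sigma> ^^ i = \<sigma>"
proof
  fix c
  show "(\<sigma> ^^ i) c = \<sigma> c"
  proof (cases "c = 0")
    case False
    have "coeff (h \<circ>\<^sub>f [:c:]) i = coeff ([:\<sigma> c:] \<circ>\<^sub>f h) i"
      using comm[OF False] by simp
    then have "coeff h i * (\<sigma> ^^ i) c = coeff h i * \<sigma> c"
      by (simp add: coeff_sf_mult_const_right[OF h] sf_mult_const_left[OF h] mult.commute)
    then show ?thesis
      using i by simp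
  qed (simp add: hom_zero)
qed

definition left_nucleus :: "'a poly set" where
  "left_nucleus = {g \<in> Lf f. \<forall>x\<in>Lf f. \<forall>y\<in>Lf f. (g \<circ>\<^sub>f x) \<circ>\<^sub>f y = g \<circ>\<^sub>f (x \<circ>\<^sub>f y)}"

lemma const_in_left_nucleus:
  assumes "z \<noteq> 0"
  shows "[:z:] \<in> left_nucleus"
  unfolding left_nucleus_def
proof (intro CollectI conjI ballI)
  fix x y
  assume "x \<in> Lf f"
  then have "[:z:] \<circ>\<^sub>f x = smult z x"
    by (simp add: Lf_def sf_mult_const_left)
  then show "([:z:] \<circ>\<^sub>f x) \<circ>\<^sub>f y = [:z:] \<circ>\<^sub>f (x \<circ>\<^sub>f y)"
    by (simp add: sf_mult_def skew_mult_smult_left skew_mult_const_left rmod_smult)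
qed (use assms Lf_const in auto)

end

locale skew_semifield = skew_quotient \<sigma> f for \<sigma> :: "'a::{finite,field} \<Rightarrow> 'a" and f +
  assumes irreducible: "skew_irreducible \<sigma> f"
begin

lemma left_bezout:
  assumes y: "y \<noteq> 0" "degree y < degree f"
  obtains a b where "a \<star> y + b \<star> f = 1"
proof -
  obtain d a b v where d: "d \<noteq> 0" "degree d \<le> degree y" "d = a \<star> y + b \<star> f" and v: "f = v \<star> d"
    using left_ideal_pair_principal[OF y(1)] by blast
  have "v \<noteq> 0"
    using v f_nonzero by auto
  then have "degree f = degree v + degree d"
    using skew_mult_nonzero(1)[OF _ d(1)] v by simp
  then have "degree v < degree f" if "degree d \<noteq> 0"
    using that by linarith
  moreover have "degree d < degree f"
    using d(2) y(2) by simp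
  ultimately have "degree d = 0"
    using irreducible v unfolding skew_irreducible_def by blast
  then obtain c where c: "d = [:c:]" "c \<noteq> 0"
    using d(1) by (metis degree_0_id pCons_0_0)
  then have "1 = [:inverse c:] \<star> d"
    by (simp add: skew_mult_const_left one_pCons)
  also have "\<dots> = ([:inverse c:] \<star> a) \<star> y + ([:inverse c:] \<star> b) \<star> f"
    by (simp add: d(3) skew_mult_add_right skew_mult_assoc)
  finally show thesis
    by (rule that[OF sym])
qed

text \<open>If x y \<in> R f, take a generator u of the left ideal of all h with h y \<in> R f, so
  deg u \<le> deg x < deg f. Since R y + R f = R, every remainder modulo f already arises from
  some p y with deg p < deg u, which is too few polynomials to cover S_f.\<close>

lemma skew_mult_notin_left_multiples:
  assumes x: "x \<noteq> 0" "degree x < degree f" and y: "y \<noteq> 0" "degree y < degree f"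
  shows "x \<star> y \<notin> left_multiples"
proof
  assume "x \<star> y \<in> left_multiples"
  obtain a b where ab: "a \<star> y + b \<star> f = 1"
    using left_bezout[OF y] by blast
  obtain u where u: "u \<star> y \<in> left_multiples" "u \<noteq> 0" "degree u \<le> degree x"
    by (rule left_ideal_principal[of "{h. h \<star> y \<in> left_multiples}" x])
      (use \<open>x \<star> y \<in> left_multiples\<close> x(1) in
        \<open>auto simp: skew_mult_diff_left skew_mult_assoc left_multiples_diff left_multiples_mult\<close>)
  then obtain w where uy: "u \<star> y = w \<star> f"
    by (auto simp: left_multiples_def)
  define D where "D = {p :: 'a poly. p = 0 \<or> degree p < degree u}"
  define S where "S = {p :: 'a poly. degree p < degree f}"
  have "S \<subseteq> (\<lambda>p. rmod (p \<star> y)) ` D"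
    using rmod_right_mult_onto[OF ab uy u(2)] by (auto simp: S_def D_def image_iff)
  moreover have "finite S"
    unfolding S_def by (rule finite_degree_less)
  moreover have "D \<subset> S"
  proof -
    have "D \<subseteq> S"
      using u(3) x(2) degree_f_pos by (auto simp: D_def S_def)
    moreover have "monom 1 (degree f - 1) \<in> S - D"
      using u(3) x(2) degree_f_pos by (auto simp: D_def S_def degree_monom_eq)
    ultimately show ?thesis
      by blast
  qed
  moreover have "finite D"
    using \<open>finite S\<close> \<open>D \<subset> S\<close> by (auto intro: finite_subset)
  ultimately have "card S \<le> card D" and "card D < card S"
    by (meson card_image_le card_mono finite_imageI le_trans psubset_card_mono)+
  then show False
    by simp
qed

lemma left_multiples_cancel:
  assumes x: "x \<noteq> 0" "degree x < degree f" and xz: "x \<star> z \<in> left_multiples"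
  shows "z \<in> left_multiples"
proof -
  obtain Q where "x \<star> rmod z = x \<star> z - Q \<star> f"
    using skew_mult_rmod_decomp by blast
  then have "x \<star> rmod z \<in> left_multiples"
    using left_multiples_diff[OF xz skew_mult_in_left_multiples[of Q]] by simp
  then have "rmod z = 0"
    using skew_mult_notin_left_multiples[OF x _ degree_rmod_less] by blast
  then show ?thesis
    by (simp add: rmod_eq_0_iff)
qed

lemma sf_mult_in_Lf: "x \<in> Lf f \<Longrightarrow> y \<in> Lf f \<Longrightarrow> x \<circ>\<^sub>f y \<in> Lf f"
  using skew_mult_notin_left_multiples degree_rmod_less by (auto simp: Lf_def sf_mult_def rmod_eq_0_iff)

lemma sf_pow_in_Lf: "x \<in> Lf f \<Longrightarrow> sf_pow \<sigma> f x i \<in> Lf f"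
  by (induction i) (simp_all add: sf_mult_in_Lf one_in_Lf)

lemma finite_Lf: "finite (Lf f)"
  using finite_degree_less[of "degree f"] by (rule finite_subset[rotated]) (auto simp: Lf_def)

lemma degree_left_nucleus:
  assumes g: "g \<in> left_nucleus" and not_ri: "\<not> right_invariant \<sigma> f"
  shows "degree g = 0"
proof (rule ccontr)
  define x where "x = (monom 1 (degree f - 1) :: 'a poly)"
  have x: "x \<in> Lf f"
    using degree_f_pos by (simp add: x_def Lf_def degree_monom_eq)
  assume "degree g \<noteq> 0"
  moreover have "degree g < degree f"
    using g by (simp add: left_nucleus_def Lf_def)
  ultimately obtain P where P: "P \<noteq> 0" "degree P < degree f" "rmod (g \<star> x) = g \<star> x - P \<star> f"
    using skew_mult_top_monom_quotient[of g] unfolding x_def by blast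
  have "f \<star> y \<in> left_multiples" if y: "y \<in> Lf f" for y
  proof -
    have "rmod (g \<star> (x \<star> y)) - rmod (P \<star> (f \<star> y)) = (g \<circ>\<^sub>f x) \<circ>\<^sub>f y"
      using P(3) by (simp add: sf_mult_def skew_mult_diff_left skew_mult_assoc rmod_diff)
    also have "\<dots> = g \<circ>\<^sub>f (x \<circ>\<^sub>f y)"
      using g x y unfolding left_nucleus_def by blast
    also have "\<dots> = rmod (g \<star> (x \<star> y))"
      by (simp add: sf_mult_def rmod_skew_mult_rmod)
    finally have "P \<star> (f \<star> y) \<in> left_multiples"
      by (simp add: rmod_eq_0_iff)
    then show ?thesis
      using left_multiples_cancel[OF P(1,2)] by blast
  qed
  then have "right_invariant \<sigma> f"
    by (rule right_invariantI)
  with not_ri show False ..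
qed

lemma left_nucleus_eq_consts:
  assumes "\<not> right_invariant \<sigma> f"
  shows "left_nucleus = {[:z:] | z. z \<noteq> 0}"
proof
  show "left_nucleus \<subseteq> {[:z:] | z. z \<noteq> 0}"
  proof
    fix g
    assume g: "g \<in> left_nucleus"
    then have "degree g = 0" "g \<noteq> 0"
      using degree_left_nucleus[OF g assms] by (auto simp: left_nucleus_def Lf_def)
    then have "g = [:coeff g 0:]" "coeff g 0 \<noteq> 0"
      by (metis degree_0_id, metis leading_coeff_0_iff)
    then show "g \<in> {[:z:] | z. z \<noteq> 0}"
      by blast
  qed
  show "{[:z:] | z. z \<noteq> 0} \<subseteq> left_nucleus"
    using const_in_left_nucleus by blast
qed

lemma loop_automorphism_image_left_nucleus:
  assumes H: "loop_automorphism \<sigma> f H"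
  shows "H ` left_nucleus = left_nucleus"
proof (rule endo_inj_surj)
  have bij: "bij_betw H (Lf f) (Lf f)"
    and hom: "\<And>x y. x \<in> Lf f \<Longrightarrow> y \<in> Lf f \<Longrightarrow> H (x \<circ>\<^sub>f y) = H x \<circ>\<^sub>f H y"
    using H by (auto simp: loop_automorphism_def)
  have sub: "left_nucleus \<subseteq> Lf f"
    by (auto simp: left_nucleus_def)
  show "finite left_nucleus"
    using finite_Lf sub by (rule finite_subset[rotated])
  show "inj_on H left_nucleus"
    using bij sub by (auto simp: bij_betw_def intro: inj_on_subset)
  show "H ` left_nucleus \<subseteq> left_nucleus"
  proof (clarsimp simp: left_nucleus_def)
    fix g
    assume g: "g \<in> Lf f" "\<forall>x\<in>Lf f. \<forall>y\<in>Lf f. (g \<circ>\<^sub>f x) \<circ>\<^sub>f y = g \<circ>\<^sub>f (x \<circ>\<^sub>f y)"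
    show "H g \<in> Lf f \<and> (\<forall>x\<in>Lf f. \<forall>y\<in>Lf f. (H g \<circ>\<^sub>f x) \<circ>\<^sub>f y = H g \<circ>\<^sub>f (x \<circ>\<^sub>f y))"
    proof (intro conjI ballI)
      show "H g \<in> Lf f"
        using bij g(1) by (auto dest: bij_betwE)
      fix x y
      assume "x \<in> Lf f" "y \<in> Lf f"
      then obtain x' y' where x': "x' \<in> Lf f" "x = H x'" and y': "y' \<in> Lf f" "y = H y'"
        using bij by (metis bij_betw_def imageE)
      have "(H g \<circ>\<^sub>f x) \<circ>\<^sub>f y = H ((g \<circ>\<^sub>f x') \<circ>\<^sub>f y')"
        using hom g(1) x' y' sf_mult_in_Lf by simp
      also have "\<dots> = H (g \<circ>\<^sub>f (x' \<circ>\<^sub>f y'))"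
        using g(2) x'(1) y'(1) by simp
      also have "\<dots> = H g \<circ>\<^sub>f (x \<circ>\<^sub>f y)"
        using hom g(1) x' y' sf_mult_in_Lf by simp
      finally show "(H g \<circ>\<^sub>f x) \<circ>\<^sub>f y = H g \<circ>\<^sub>f (x \<circ>\<^sub>f y)" .
    qed
  qed
qed

lemma loop_automorphism_sf_pow:
  assumes H: "loop_automorphism \<sigma> f H" and x: "x \<in> Lf f" and i: "0 < i"
  shows "H (sf_pow \<sigma> f x i) = sf_pow \<sigma> f (H x) i"
  using i
proof (induction i)
  case (Suc i)
  have hom: "H (x \<circ>\<^sub>f sf_pow \<sigma> f x i) = H x \<circ>\<^sub>f H (sf_pow \<sigma> f x i)"
    using H x sf_pow_in_Lf[OF x] by (simp add: loop_automorphism_def)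
  show ?case
  proof (cases "i = 0")
    case True
    have "H x \<in> Lf f"
      using H x by (auto simp: loop_automorphism_def dest: bij_betwE)
    then show ?thesis
      using x True by (simp add: Lf_def)
  next
    case False
    then show ?thesis
      using Suc hom by simp
  qed
qed simp

end

section \<open>Loop automorphisms of L_f\<close>

locale semifield_loop_automorphism = skew_semifield \<sigma> f
  for \<sigma> :: "'a::{finite,field} \<Rightarrow> 'a" and f +
  fixes H :: "'a poly \<Rightarrow> 'a poly"
  assumes loop_aut: "loop_automorphism \<sigma> f H"
    and not_right_invariant: "\<not> right_invariant \<sigma> f"
begin

lemma H_in_Lf: "x \<in> Lf f \<Longrightarrow> H x \<in> Lf f"
  using loop_aut by (auto simp: loop_automorphism_def dest: bij_betwE)

lemma H_sf_mult: "x \<in> Lf f \<Longrightarrow> y \<in> Lf f \<Longrightarrow> H (x \<circ>\<^sub>f y) = H x \<circ>\<^sub>f H y"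
  using loop_aut by (simp add: loop_automorphism_def)

lemma image_consts: "H ` {[:z:] | z. z \<noteq> 0} = {[:z:] | z. z \<noteq> 0}"
  using loop_automorphism_image_left_nucleus[OF loop_aut] left_nucleus_eq_consts[OF not_right_invariant]
  by simp

definition const_aut :: "'a \<Rightarrow> 'a" where
  "const_aut z = coeff (H [:z:]) 0"

lemma H_const: "z \<noteq> 0 \<Longrightarrow> H [:z:] = [:const_aut z:] \<and> const_aut z \<noteq> 0"
proof -
  assume "z \<noteq> 0"
  then have "H [:z:] \<in> {[:w:] | w. w \<noteq> 0}"
    using image_consts by blast
  then show ?thesis
    by (auto simp: const_aut_def)
qed

lemma image_const_aut: "const_aut ` (UNIV - {0}) = UNIV - {0}"
proof
  show "const_aut ` (UNIV - {0}) \<subseteq> UNIV - {0}"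
    using H_const by auto
  show "UNIV - {0} \<subseteq> const_aut ` (UNIV - {0})"
  proof
    fix w :: 'a
    assume "w \<in> UNIV - {0}"
    then have "[:w:] \<in> H ` {[:z:] | z. z \<noteq> 0}"
      using image_consts by auto
    then obtain z where "z \<noteq> 0" "[:w:] = H [:z:]"
      by blast
    then show "w \<in> const_aut ` (UNIV - {0})"
      using H_const by auto
  qed
qed

lemma mult_group_automorphism_const_aut: "mult_group_automorphism const_aut"
  unfolding mult_group_automorphism_def bij_betw_def
proof (intro conjI allI impI image_const_aut)
  show "const_aut (x * y) = const_aut x * const_aut y" if "x \<noteq> 0" "y \<noteq> 0" for x y
    using H_sf_mult[OF Lf_const Lf_const, of x y] H_const that by (simp add: sf_mult_const_const)
  show "inj_on const_aut (UNIV - {0})"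
  proof (rule inj_onI)
    fix x y
    assume "x \<in> UNIV - {0}" "y \<in> UNIV - {0}" "const_aut x = const_aut y"
    then have "H [:x:] = H [:y:]" "[:x:] \<in> Lf f" "[:y:] \<in> Lf f"
      using H_const Lf_const by auto
    moreover have "inj_on H (Lf f)"
      using loop_aut by (simp add: loop_automorphism_def bij_betw_def)
    ultimately show "x = y"
      by (metis inj_onD pCons_eq_iff)
  qed
qed

lemma H_t_twisted_commute:
  assumes "1 < degree f" and "c \<noteq> 0"
  shows "H (monom 1 1) \<circ>\<^sub>f [:c:] = [:\<sigma> c:] \<circ>\<^sub>f H (monom 1 1)"
proof -
  have "c \<in> const_aut ` (UNIV - {0})"
    using image_const_aut assms(2) by simp
  then obtain z where z: "z \<noteq> 0" and c: "c = const_aut z"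
    by blast
  have \<sigma>z: "\<sigma> z \<noteq> 0"
    using z iter_eq_0_iff[of 1] by simp
  have \<sigma>c: "const_aut (\<sigma> z) = \<sigma> c"
    using nonzero_mult_homs_commute[OF mult_group_automorphism_imp_nonzero_mult_hom nonzero_mult_hom]
      mult_group_automorphism_const_aut z c by blast
  have "H (monom 1 1) \<circ>\<^sub>f [:c:] = H (monom 1 1 \<circ>\<^sub>f [:z:])"
    using H_sf_mult[OF t_in_Lf Lf_const[OF z]] H_const[OF z] assms(1) c by simp
  also have "\<dots> = H ([:\<sigma> z:] \<circ>\<^sub>f monom 1 1)"
    by (rule arg_cong[OF monom_sf_mult_const])
  also have "\<dots> = [:\<sigma> c:] \<circ>\<^sub>f H (monom 1 1)"
    using H_sf_mult[OF Lf_const[OF \<sigma>z] t_in_Lf] H_const[OF \<sigma>z] assms(1) \<sigma>c by simp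
  finally show ?thesis .
qed

lemma H_t_monomial:
  assumes order: "\<And>j. 0 < j \<Longrightarrow> j < n \<Longrightarrow> \<sigma> ^^ j \<noteq> id" and "1 < n"
    and "1 < degree f" "degree f \<le> n + 1"
  obtains k where "k \<noteq> 0" "H (monom 1 1) = monom k 1"
proof -
  define h where "h = H (monom 1 1)"
  have h: "h \<noteq> 0" "degree h < degree f"
    using H_in_Lf t_in_Lf assms(3) by (simp_all add: h_def Lf_def)
  have "coeff h i = 0" if "i \<noteq> 1" for i
  proof (rule ccontr)
    assume ci: "coeff h i \<noteq> 0"
    then have "\<sigma> ^^ i = \<sigma>"
      using twisted_commuting_coeff[OF h(2)] H_t_twisted_commute[OF assms(3)] by (simp add: h_def)
    moreover have "i \<le> n"
      using le_degree[OF ci] h(2) assms(4) by simp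
    moreover have "\<sigma> \<noteq> id"
      using order[of 1] \<open>1 < n\<close> by simp
    ultimately have "i = 1"
      using iter_eq_self_imp_1[OF _ _ order] by blast
    with that show False ..
  qed
  then have "h = monom (coeff h 1) 1"
    by (intro poly_eqI) (simp add: coeff_monom)
  moreover have "coeff h 1 \<noteq> 0"
    using h(1) calculation by (metis monom_eq_0_iff)
  ultimately show thesis
    using that h_def by blast
qed

lemma H_monom:
  assumes t: "H (monom 1 1) = monom k 1" and i: "0 < i" "i < degree f" and z: "z \<noteq> 0"
  shows "H (monom z i) = H [:z:] \<circ>\<^sub>f sf_pow \<sigma> f (H (monom 1 1)) i"
    and "H [:z:] \<circ>\<^sub>f sf_pow \<sigma> f (H (monom 1 1)) i = [:const_aut z:] \<circ>\<^sub>f sf_pow \<sigma> f (monom k 1) i"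
    and "[:const_aut z:] \<circ>\<^sub>f sf_pow \<sigma> f (monom k 1) i = monom (const_aut z * (\<Prod>l<i. (\<sigma> ^^ l) k)) i"
proof -
  have "monom z i = [:z:] \<circ>\<^sub>f sf_pow \<sigma> f (monom 1 1) i"
    unfolding sf_pow_t[OF i(2)] sf_mult_const_left[OF degree_monom_less[OF i(2)]] by (simp add: smult_monom)
  moreover have "sf_pow \<sigma> f (monom 1 1) i \<in> Lf f"
    unfolding sf_pow_t[OF i(2)] using i(2) by (simp add: Lf_def degree_monom_eq)
  ultimately show "H (monom z i) = H [:z:] \<circ>\<^sub>f sf_pow \<sigma> f (H (monom 1 1)) i"
    using H_sf_mult[OF Lf_const[OF z]] loop_automorphism_sf_pow[OF loop_aut t_in_Lf] i by simp
  show "H [:z:] \<circ>\<^sub>f sf_pow \<sigma> f (H (monom 1 1)) i = [:const_aut z:] \<circ>\<^sub>f sf_pow \<sigma> f (monom k 1) i"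
    using H_const[OF z] t by simp
  show "[:const_aut z:] \<circ>\<^sub>f sf_pow \<sigma> f (monom k 1) i = monom (const_aut z * (\<Prod>l<i. (\<sigma> ^^ l) k)) i"
    using i(2) by (rule sf_mult_const_sf_pow_monom)
qed

lemma H_sf_pow_t:
  assumes t: "H (monom 1 1) = monom k 1" and "1 < degree f" and i: "0 < i" "i \<le> degree f"
  shows "H (sf_pow \<sigma> f (monom 1 1) i) = sf_pow \<sigma> f (H (monom 1 1)) i"
    and "sf_pow \<sigma> f (H (monom 1 1)) i = smult (\<Prod>l<i. (\<sigma> ^^ l) k) (sf_pow \<sigma> f (monom 1 1) i)"
  using loop_automorphism_sf_pow[OF loop_aut t_in_Lf[OF assms(2)] i(1)] sf_pow_monom_eq_smult[OF i(2)]
  unfolding t by blast+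

lemma H_t_powers:
  assumes order: "\<And>j. 0 < j \<Longrightarrow> j < n \<Longrightarrow> \<sigma> ^^ j \<noteq> id" and n: "1 < n"
    and deg: "1 < degree f" "degree f - 1 \<le> n" and monic: "lead_coeff f = 1"
  shows "\<exists>k. k \<noteq> 0 \<and> H (monom 1 1) = monom k 1 \<and>
      (\<forall>i\<in>{1..degree f - 1}. \<forall>z. z \<noteq> 0 \<longrightarrow>
         H (monom z i) = H [:z:] \<circ>\<^sub>f sf_pow \<sigma> f (H (monom 1 1)) i \<and>
         H (monom z i) = [:const_aut z:] \<circ>\<^sub>f sf_pow \<sigma> f (monom k 1) i \<and>
         H (monom z i) = monom (const_aut z * (\<Prod>l<i. (\<sigma> ^^ l) k)) i) \<and>
      (\<forall>i\<in>{1..degree f}.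
         H (sf_pow \<sigma> f (monom 1 1) i) = sf_pow \<sigma> f (H (monom 1 1)) i \<and>
         H (sf_pow \<sigma> f (monom 1 1) i) = sf_pow \<sigma> f (monom k 1) i \<and>
         H (sf_pow \<sigma> f (monom 1 1) i) = smult (\<Prod>l<i. (\<sigma> ^^ l) k) (sf_pow \<sigma> f (monom 1 1) i)) \<and>
      H (monom 1 (degree f) - f) = smult (\<Prod>l<degree f. (\<sigma> ^^ l) k) (monom 1 (degree f) - f)"
proof -
  obtain k where k: "k \<noteq> 0" "H (monom 1 1) = monom k 1"
    using H_t_monomial[OF order n deg(1)] deg(2) by (metis le_diff_conv)
  have H_pow: "H (sf_pow \<sigma> f (monom 1 1) i) = sf_pow \<sigma> f (H (monom 1 1)) i \<and>
      H (sf_pow \<sigma> f (monom 1 1) i) = sf_pow \<sigma> f (monom k 1) i \<and>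
      H (sf_pow \<sigma> f (monom 1 1) i) = smult (\<Prod>l<i. (\<sigma> ^^ l) k) (sf_pow \<sigma> f (monom 1 1) i)"
    if "i \<in> {1..degree f}" for i
    using H_sf_pow_t[OF k(2) deg(1), of i] k(2) that by simp
  have H_monom_all: "H (monom z i) = H [:z:] \<circ>\<^sub>f sf_pow \<sigma> f (H (monom 1 1)) i \<and>
      H (monom z i) = [:const_aut z:] \<circ>\<^sub>f sf_pow \<sigma> f (monom k 1) i \<and>
      H (monom z i) = monom (const_aut z * (\<Prod>l<i. (\<sigma> ^^ l) k)) i"
    if "i \<in> {1..degree f - 1}" "z \<noteq> 0" for i z
  proof -
    have "0 < i" "i < degree f"
      using that deg(1) by auto
    from H_monom[OF k(2) this that(2)] show ?thesis
      by simp
  qed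
  have "H (monom 1 (degree f) - f) = smult (\<Prod>l<degree f. (\<sigma> ^^ l) k) (monom 1 (degree f) - f)"
    using H_pow[of "degree f"] deg(1) unfolding sf_pow_t_degree[OF monic] by auto
  then show ?thesis
    using k H_monom_all H_pow by blast
qed

end

theorem mainTheorem1:
  fixes \<sigma> :: "'a::{finite,field} \<Rightarrow> 'a" and q n :: nat
    and f :: "'a poly" and H :: "'a poly \<Rightarrow> 'a poly"
  assumes card_K: "card (UNIV :: 'a set) = q ^ n"
    and aut: "field_automorphism \<sigma>"
    and n_gt: "n > 1"
    and ord_n: "\<sigma> ^^ n = id" "\<forall>j. 0 < j \<and> j < n \<longrightarrow> \<sigma> ^^ j \<noteq> id"
    and fixed: "card {x. \<sigma> x = x} = q"
    and monic: "lead_coeff f = 1"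
    and deg: "degree f \<ge> 2"
    and irr: "skew_irreducible \<sigma> f"
    and not_ri: "\<not> right_invariant \<sigma> f"
    and H: "loop_automorphism \<sigma> f H"
  shows "\<exists>\<tau>. mult_group_automorphism \<tau> \<and>
           H ` {[:z:] | z. z \<noteq> 0} = {[:z:] | z. z \<noteq> 0} \<and>
           (\<forall>z. z \<noteq> 0 \<longrightarrow> H [:z:] = [:\<tau> z:]) \<and>
           (n \<ge> degree f - 1 \<longrightarrow>
             (\<exists>k. k \<noteq> 0 \<and>
                H (monom 1 1) = monom k 1 \<and>
                (\<forall>i\<in>{1..degree f - 1}. \<forall>z. z \<noteq> 0 \<longrightarrow>
                   H (monom z i) = sf_mult \<sigma> f (H [:z:]) (sf_pow \<sigma> f (H (monom 1 1)) i) \<and>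
                   H (monom z i) = sf_mult \<sigma> f [:\<tau> z:] (sf_pow \<sigma> f (monom k 1) i) \<and>
                   H (monom z i) = monom (\<tau> z * (\<Prod>l<i. (\<sigma> ^^ l) k)) i) \<and>
                (\<forall>i\<in>{1..degree f}.
                   H (sf_pow \<sigma> f (monom 1 1) i) = sf_pow \<sigma> f (H (monom 1 1)) i \<and>
                   H (sf_pow \<sigma> f (monom 1 1) i) = sf_pow \<sigma> f (monom k 1) i \<and>
                   H (sf_pow \<sigma> f (monom 1 1) i) =
                     smult (\<Prod>l<i. (\<sigma> ^^ l) k) (sf_pow \<sigma> f (monom 1 1) i)) \<and>
                H (monom 1 (degree f) - f) =
                  smult (\<Prod>l<degree f. (\<sigma> ^^ l) k) (monom 1 (degree f) - f)))"
proof -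
  interpret field_endo \<sigma>
    by (rule field_automorphism_imp_field_endo[OF aut])
  interpret semifield_loop_automorphism \<sigma> f H
    by unfold_locales (use deg irr H not_ri in auto)
  have "\<And>j. 0 < j \<Longrightarrow> j < n \<Longrightarrow> \<sigma> ^^ j \<noteq> id" and "1 < degree f"
    using ord_n(2) deg by auto
  then show ?thesis
    using mult_group_automorphism_const_aut image_consts H_const H_t_powers[OF _ n_gt _ _ monic]
    by blast
qed

end
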